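(* Let $f(x_1,x_2,x_3,x_4)=\det P(x_1,x_2,x_3,x_4)$ where $$P(x_1,x_2,x_3,x_4)=\begin{bmatrix}x_1 & x_2 & x_3 & x_4\\ -nx_2 & x_1+mx_2 & -nx_4 & x_3+mx_4\\ -qx_3 & -qx_4 & x_1+px_3 & x_2+px_4\\ qnx_4 & -q(x_3+mx_4) & -nx_2-pnx_4 & x_1+mx_2+p(x_3+mx_4)\end{bmatrix}$$ with $(m,n,p,q)=(5,-23,2,-7)$. Then the quartic diophantine equation $f(x_1,x_2,x_3,x_4)=1$ has infinitely many solutions in positive integers (one of them being $(6,2,3,1)$). *)

theory Defs
  imports "Jordan_Normal_Form.Determinant"
begin

definition Pmat :: "int \<Rightarrow> int \<Rightarrow> int \<Rightarrow> int \<Rightarrow> int \<Rightarrow> int \<Rightarrow> int \<Rightarrow> int \<Rightarrow> int mat" where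
  "Pmat m n p q x1 x2 x3 x4 = mat_of_rows_list 4
    [[x1, x2, x3, x4],
     [- n * x2, x1 + m * x2, - n * x4, x3 + m * x4],
     [- q * x3, - q * x4, x1 + p * x3, x2 + p * x4],
     [q * n * x4, - q * (x3 + m * x4), - n * x2 - p * n * x4, x1 + m * x2 + p * (x3 + m * x4)]]"

definition f :: "int \<Rightarrow> int \<Rightarrow> int \<Rightarrow> int \<Rightarrow> int" where
  "f x1 x2 x3 x4 = det (Pmat 5 (-23) 2 (-7) x1 x2 x3 x4)"

end

theory Submission
  imports Defs
begin

text \<open>
  \<open>P(x)\<close> is the matrix of multiplication by \<open>x = x\<^sub>1 + x\<^sub>2 \<alpha> + x\<^sub>3 \<beta> + x\<^sub>4 \<alpha>\<beta>\<close> in the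
  commutative ring with \<open>\<alpha>\<^sup>2 = m\<alpha> - n\<close> and \<open>\<beta>\<^sup>2 = p\<beta> - q\<close>, so \<open>P(x) P(y) = P(xy)\<close> and \<open>f\<close> is
  a multiplicative norm form. Since \<open>f(6,2,3,1) = 1\<close>, multiplication by the unit \<open>6 + 2\<alpha> + 3\<beta> + \<alpha>\<beta>\<close>
  maps solutions of \<open>f = 1\<close> to solutions; it has positive coefficients, so it keeps solutions
  positive and strictly increases the first coordinate.
\<close>

lemma det_mat_Suc:
  "det (mat (Suc k) (Suc k) g :: 'a::comm_ring_1 mat) =
   (\<Sum>j<Suc k. g (0, j) * (-1) ^ j * det (mat k k (\<lambda>(i, l). g (Suc i, if l < j then l else Suc l))))"
proof -
  let ?A = "mat (Suc k) (Suc k) g"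
  have "det ?A = (\<Sum>j<Suc k. ?A $$ (0, j) * cofactor ?A 0 j)"
    by (rule laplace_expansion_row) simp_all
  also have "\<dots> = (\<Sum>j<Suc k. g (0, j) * (-1) ^ j * det (mat k k (\<lambda>(i, l). g (Suc i, if l < j then l else Suc l))))"
  proof (rule sum.cong)
    fix j assume "j \<in> {..<Suc k}"
    then have "mat_delete ?A 0 j = mat k k (\<lambda>(i, l). g (Suc i, if l < j then l else Suc l))"
      by (intro eq_matI) (auto simp: mat_delete_def)
    with \<open>j \<in> {..<Suc k}\<close> show "?A $$ (0, j) * cofactor ?A 0 j = g (0, j) * (-1) ^ j * det (mat k k (\<lambda>(i, l). g (Suc i, if l < j then l else Suc l)))"
      by (simp add: cofactor_def)
  qed simp
  finally show ?thesis .
qed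

lemma Pmat_mult:
  "Pmat m n p q x1 x2 x3 x4 * Pmat m n p q y1 y2 y3 y4 =
   Pmat m n p q
     (x1 * y1 - n * x2 * y2 - q * x3 * y3 + q * n * x4 * y4)
     (x1 * y2 + x2 * (y1 + m * y2) - q * x3 * y4 - q * x4 * (y3 + m * y4))
     (x1 * y3 - n * x2 * y4 + x3 * (y1 + p * y3) - x4 * (n * y2 + p * n * y4))
     (x1 * y4 + x2 * (y3 + m * y4) + x3 * (y2 + p * y4) + x4 * (y1 + m * y2 + p * (y3 + m * y4)))"
  unfolding Pmat_def mat_of_rows_list_def
  by (rule eq_matI)
     (auto simp: scalar_prod_def numeral_eq_Suc less_Suc_eq lessThan_Suc algebra_simps)

lemma det_Pmat_mult:
  "det (Pmat m n p q
     (x1 * y1 - n * x2 * y2 - q * x3 * y3 + q * n * x4 * y4)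
     (x1 * y2 + x2 * (y1 + m * y2) - q * x3 * y4 - q * x4 * (y3 + m * y4))
     (x1 * y3 - n * x2 * y4 + x3 * (y1 + p * y3) - x4 * (n * y2 + p * n * y4))
     (x1 * y4 + x2 * (y3 + m * y4) + x3 * (y2 + p * y4) + x4 * (y1 + m * y2 + p * (y3 + m * y4))))
   = det (Pmat m n p q x1 x2 x3 x4) * det (Pmat m n p q y1 y2 y3 y4)"
proof -
  have carrier: "Pmat m n p q z1 z2 z3 z4 \<in> carrier_mat 4 4" for z1 z2 z3 z4
    unfolding Pmat_def mat_of_rows_list_def carrier_mat_def by simp
  show ?thesis
    by (simp only: Pmat_mult[symmetric] det_mult[OF carrier carrier])
qed

lemma f_unit: "f 6 2 3 1 = 1"
  unfolding f_def Pmat_def mat_of_rows_list_def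
  by (simp add: numeral_eq_Suc det_mat_Suc lessThan_Suc)

lemma f_mult_unit:
  "f (6 * x1 + 46 * x2 + 21 * x3 + 161 * x4) (2 * x1 + 16 * x2 + 7 * x3 + 56 * x4)
     (3 * x1 + 23 * x2 + 12 * x3 + 92 * x4) (x1 + 8 * x2 + 4 * x3 + 32 * x4) = f x1 x2 x3 x4"
proof -
  have "f (6 * x1 + 46 * x2 + 21 * x3 + 161 * x4) (2 * x1 + 16 * x2 + 7 * x3 + 56 * x4)
      (3 * x1 + 23 * x2 + 12 * x3 + 92 * x4) (x1 + 8 * x2 + 4 * x3 + 32 * x4) = f x1 x2 x3 x4 * f 6 2 3 1"
    unfolding f_def det_Pmat_mult[symmetric] by (simp add: algebra_simps)
  then show ?thesis by (simp add: f_unit)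
qed

lemma infinite_if_increasing_self_map:
  fixes h :: "'a \<Rightarrow> 'b::linorder"
  assumes "a \<in> A" and "\<And>x. x \<in> A \<Longrightarrow> g x \<in> A" and "\<And>x. x \<in> A \<Longrightarrow> h x < h (g x)"
  shows "infinite A"
proof
  assume "finite A"
  have "Max (h ` A) \<in> h ` A"
    using \<open>finite A\<close> \<open>a \<in> A\<close> by (intro Max_in) auto
  then obtain x where "x \<in> A" and "h x = Max (h ` A)" by auto
  moreover have "h (g x) \<le> Max (h ` A)"
    using \<open>finite A\<close> \<open>x \<in> A\<close> assms(2) by (intro Max_ge) auto
  ultimately show False
    using assms(3) by fastforce
qed

definition mult_unit :: "int \<times> int \<times> int \<times> int \<Rightarrow> int \<times> int \<times> int \<times> int" where
  "mult_unit = (\<lambda>(x1, x2, x3, x4).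
     (6 * x1 + 46 * x2 + 21 * x3 + 161 * x4, 2 * x1 + 16 * x2 + 7 * x3 + 56 * x4,
      3 * x1 + 23 * x2 + 12 * x3 + 92 * x4, x1 + 8 * x2 + 4 * x3 + 32 * x4))"

theorem mainTheorem5:
  shows "f 6 2 3 1 = 1 \<and>
    infinite {(x1::int, x2::int, x3::int, x4::int).
      x1 > 0 \<and> x2 > 0 \<and> x3 > 0 \<and> x4 > 0 \<and> f x1 x2 x3 x4 = 1}"
proof
  show "f 6 2 3 1 = 1" by (rule f_unit)
  let ?S = "{(x1::int, x2::int, x3::int, x4::int). x1 > 0 \<and> x2 > 0 \<and> x3 > 0 \<and> x4 > 0 \<and> f x1 x2 x3 x4 = 1}"
  show "infinite ?S"
  proof (rule infinite_if_increasing_self_map)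
    show "(6, 2, 3, 1) \<in> ?S" by (simp add: f_unit)
    show "mult_unit x \<in> ?S" if "x \<in> ?S" for x
      using that by (auto simp: mult_unit_def f_mult_unit)
    show "fst x < fst (mult_unit x)" if "x \<in> ?S" for x
      using that by (auto simp: mult_unit_def)
  qed
qed

end
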